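(* There is a constant $C_2>0$, depending only on $p$, such that for every sequence $(\mathcal K_\ell)_{\ell\in\mathbb N_0}$ as below, every $L\in\mathbb N_0$, every choice of nodes $\widetilde z_{\ell,i}$ as below, every $m\in\mathbb N_0$ and every $z\in\mathcal N_L$, the set $$\mathcal Z_m(z):=\{(\ell,i):\ell\in\{0,\dots,L\},\ i\in\widetilde{\mathcal I}_\ell,\ {\rm level}_\ell(\widetilde z_{\ell,i})=m,\ z=\widetilde z_{\ell,i}\}$$ satisfies $|\mathcal Z_m(z)|\le C_2$.
   Context: Geometry: $\Omega\subset\mathbb R^2$ is a bounded simply connected Lipschitz domain with piecewise smooth boundary, $\Gamma\subseteq\partial\Omega$ is connected with Lipschitz relative boundary. Either $\Gamma=\partial\Omega$ (closed case), parametrized by a continuous, piecewise continuously differentiable $\gamma:[a,b]\to\Gamma$ with $\gamma(a)=\gamma(b)$ and $\gamma|_{[a,b)}$ bijective, or $\Gamma\subsetneq\partial\Omega$ (open case), parametrized by a bijective continuous piecewise $C^1$ map $\gamma:[a,b]\to\Gamma$; the one-sided derivatives satisfy $\gamma^{\prime_\ell}(t)\neq0$ for $t\in(a,b]$, $\gamma^{\prime_r}(t)\ne0$ for $t\in[a,b)$, and $\gamma^{\prime_\ell}(t)+c\gamma^{\prime_r}(t)\ne0$ for all $c>0$ (for $t\in[a,b]$ in the closed, $t\in(a,b)$ in the open case). Write $\gamma^{-1}:=(\gamma|_{[a,b)})^{-1}$. Set $o=0$ in the closed and $o=1$ in the open case. Fix $p\in\mathbb N$. Knot vectors: a knot vector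 $\mathcal K_\bullet$ consists of parameter nodes $a=\hat z_0<\dots<\hat z_n=b$ such that $\gamma$ is $C^1$ on each $[\hat z_{j-1},\hat z_j]$, with multiplicities $\#_\bullet\in\{1,\dots,p\}$ at interior nodes and $p+1$ at $\hat z_0,\hat z_n$; nodes $\mathcal N_\bullet=\{\gamma(\hat z_j)\}$ (multiplicities transferred), $N_\bullet=\sum_{j=1}^n\#_\bullet\hat z_j$; the mesh $\mathcal T_\bullet$ consists of the elements $\gamma([\hat z_{j-1},\hat z_j])$; $\hat\kappa_\bullet=\max\{|\gamma^{-1}(T)|/|\gamma^{-1}(T')|:T,T'\in\mathcal T_\bullet,T\cap T'\ne\emptyset\}$. The parameter knots list $\hat z_1,\dots,\hat z_n$ (closed, indices $1,\dots,N_\bullet$) resp. $\hat z_0,\dots,\hat z_n$ (open, indices $-p,\dots,N_\bullet$) increasingly with multiplicity, extended to a nondecreasing $(t_{\bullet,i})_{i\in\mathbb Z}$ with $t_{\bullet,-p}=\dots=t_{\bullet,0}=a$, $t_{\bullet,i}\to\pm\infty$, identically outside $(a,b]$ for all knot vectors. A fixed initial knot vector $\mathcal K_0$ (mesh $\mathcal T_0$) and $\hat\kappa_{\max}\ge1$ are given; $\mathbb K$ is the set of knot vectors with $\hat\kappa_\bullet\le\hat\kappa_{\max}$ obtained from $\mathcal K_0$ by dyadic bisections in the parameter domain and multiplicity increases. $\mathcal K_\circ\in\mathrm{refine}(\mathcal K_\bullet)$ means $\mathcal N_\bullet\subseteq\mathcal N_\circ$, $\#_\bullet z\le\#_\circ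 z$ for $z\in\mathcal N_\bullet$, and every $T\in\mathcal T_\circ$ lies in some $T'\in\mathcal T_\bullet$ with $|\gamma^{-1}(T')|=2^j|\gamma^{-1}(T)|$, $j\in\mathbb N_0$. $(\mathcal K_\ell)_{\ell\in\mathbb N_0}$ is a sequence in $\mathbb K$ starting with $\mathcal K_0$ and with $\mathcal K_{\ell+1}\in\mathrm{refine}(\mathcal K_\ell)$. B-splines: $\hat B_{\bullet,i,0}=\chi_{[t_{\bullet,i-1},t_{\bullet,i})}$, $\hat B_{\bullet,i,q}=\beta_{\bullet,i-1,q}\hat B_{\bullet,i,q-1}+(1-\beta_{\bullet,i,q})\hat B_{\bullet,i+1,q-1}$, $\beta_{\bullet,i,q}(t)=(t-t_{\bullet,i})/(t_{\bullet,i+q}-t_{\bullet,i})$ if $t_{\bullet,i}\neq t_{\bullet,i+q}$, else $0$. Weights/NURBS: initial weights $w_{0,i}>0$ ($i=1-p,\dots,N_0-p$, $w_{0,1-p}=w_{0,N_0-p}$), $\hat w=\sum_kw_{0,k}\hat B_{0,k,p}|_{[a,b]}$; for $\mathcal K_\bullet$, $w_{\bullet,i}$ are the unique coefficients with $\hat w=\sum_kw_{\bullet,k}\hat B_{\bullet,k,p}$ on $[a,b]$; $R_{\bullet,i,p}=(w_{\bullet,i}\hat B_{\bullet,i,p}/\hat w)\circ\gamma^{-1}$, $\bar R_{\bullet,1-p,p}=R_{\bullet,1-p,p}+R_{\bullet,N_\bullet-p,p}$, $\bar R_{\bullet,i,p}=R_{\bullet,i,p}$ otherwise. Multilevel index sets: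 $\widetilde{\mathcal N}_{0\setminus-1}=\mathcal N_0$ and, for $\ell\ge1$, $\widetilde{\mathcal N}_{\ell\setminus\ell-1}=(\mathcal N_\ell\setminus\mathcal N_{\ell-1})\cup\{z\in\mathcal N_\ell\cap\mathcal N_{\ell-1}:\#_\ell z>\#_{\ell-1}z\}$; $\widetilde{\mathcal I}_\ell=\{i\in\{1-p+o,\dots,N_\ell-p-1\}:\mathrm{supp}(\bar R_{\ell,i,p})\cap\widetilde{\mathcal N}_{\ell\setminus\ell-1}\neq\emptyset\}$. For all $\ell$ and $i\in\widetilde{\mathcal I}_\ell$ a node $\widetilde z_{\ell,i}\in\widetilde{\mathcal N}_{\ell\setminus\ell-1}\cap\mathrm{supp}(\bar R_{\ell,i,p})$ is fixed. Level: for $T\in\mathcal T_\bullet$ with ancestor $T_0\in\mathcal T_0$ ($T\subseteq T_0$), $\mathrm{gen}(T)=\log_2(|\gamma^{-1}(T_0)|/|\gamma^{-1}(T)|)\in\mathbb N_0$; for $z\in\mathcal N_\bullet$, ${\rm level}_\bullet(z)=\max\{\mathrm{gen}(T):T\in\mathcal T_\bullet,z\in T\}$. *)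

theory Defs
  imports "HOL-Analysis.Analysis"
begin

definition C1_on :: "(real \<Rightarrow> real^2) \<Rightarrow> real \<Rightarrow> real \<Rightarrow> bool" where
  "C1_on g c d \<longleftrightarrow> (\<exists>g'. continuous_on {c..d} g' \<and>
      (\<forall>t\<in>{c..d}. (g has_vector_derivative g' t) (at t within {c..d})))"

definition piecewise_C1 :: "(real \<Rightarrow> real^2) \<Rightarrow> real \<Rightarrow> real \<Rightarrow> bool" where
  "piecewise_C1 g a b \<longleftrightarrow> (\<exists>S. finite S \<and> a \<in> S \<and> b \<in> S \<and> S \<subseteq> {a..b} \<and>
      (\<forall>c\<in>S. \<forall>d\<in>S. c < d \<and> {c<..<d} \<inter> S = {} \<longrightarrow> C1_on g c d))"

text \<open>Lipschitz domain in the plane: bounded open set which near every boundary point is,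
  after a rotation/reflection, the strict epigraph of a Lipschitz function.\<close>
definition lipschitz_domain :: "(real^2) set \<Rightarrow> bool" where
  "lipschitz_domain \<Omega> \<longleftrightarrow> open \<Omega> \<and> bounded \<Omega> \<and>
     (\<forall>x\<in>frontier \<Omega>. \<exists>r>0. \<exists>Q :: real^2 \<Rightarrow> real^2. \<exists>f :: real \<Rightarrow> real. \<exists>L.
        orthogonal_transformation Q \<and> L-lipschitz_on UNIV f \<and>
        \<Omega> \<inter> ball x r = {y \<in> ball x r. f ((Q y) $ 1) < (Q y) $ 2})"

definition piecewise_smooth_boundary :: "(real^2) set \<Rightarrow> bool" where
  "piecewise_smooth_boundary \<Omega> \<longleftrightarrow> (\<exists>g c d. c < d \<and> continuous_on {c..d} g \<and>
      piecewise_C1 g c d \<and> g c = g d \<and> inj_on g {c..<d} \<and> g ` {c..d} = frontier \<Omega>)"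

text \<open>Standing assumptions on Omega, gamma, [a,b]; cl = True is the closed case
  (Gamma = boundary of Omega), cl = False the open case.\<close>
definition geometry :: "(real^2) set \<Rightarrow> (real \<Rightarrow> real^2) \<Rightarrow> real \<Rightarrow> real \<Rightarrow> bool \<Rightarrow> bool" where
  "geometry \<Omega> g a b cl \<longleftrightarrow>
     bounded \<Omega> \<and> open \<Omega> \<and> connected \<Omega> \<and> simply_connected \<Omega> \<and>
     lipschitz_domain \<Omega> \<and> piecewise_smooth_boundary \<Omega> \<and>
     a < b \<and> continuous_on {a..b} g \<and> piecewise_C1 g a b \<and>
     (if cl then g a = g b \<and> inj_on g {a..<b} \<and> g ` {a..b} = frontier \<Omega>
      else inj_on g {a..b} \<and> g ` {a..b} \<subseteq> frontier \<Omega> \<and> g ` {a..b} \<noteq> frontier \<Omega>) \<and>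
     \<comment> \<open>left derivatives nonzero on (a,b]\<close>
     (\<forall>t\<in>{a<..b}. \<forall>v. (g has_vector_derivative v) (at t within {a..t}) \<longrightarrow> v \<noteq> 0) \<and>
     \<comment> \<open>right derivatives nonzero on [a,b)\<close>
     (\<forall>t\<in>{a..<b}. \<forall>v. (g has_vector_derivative v) (at t within {t..b}) \<longrightarrow> v \<noteq> 0) \<and>
     \<comment> \<open>no cusps at interior parameters\<close>
     (\<forall>t\<in>{a<..<b}. \<forall>vl vr c. c > 0 \<and> (g has_vector_derivative vl) (at t within {a..t}) \<and>
         (g has_vector_derivative vr) (at t within {t..b}) \<longrightarrow> vl + c *\<^sub>R vr \<noteq> 0) \<and>
     \<comment> \<open>closed case: no cusp at gamma(a)=gamma(b) (left derivative at a = left derivative at b,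
         right derivative at b = right derivative at a)\<close>
     (cl \<longrightarrow> (\<forall>vl vr c. c > 0 \<and> (g has_vector_derivative vl) (at b within {a..b}) \<and>
         (g has_vector_derivative vr) (at a within {a..b}) \<longrightarrow> vl + c *\<^sub>R vr \<noteq> 0))"

text \<open>A knot vector is represented by the sorted list ts = (t_{-p},...,t_N) of all parameter
  knots repeated according to multiplicity (a and b with multiplicity p+1).\<close>

definition elems :: "real list \<Rightarrow> (real \<times> real) set" where
  "elems ts = {(c, d). c \<in> set ts \<and> d \<in> set ts \<and> c < d \<and> (\<forall>x\<in>set ts. \<not> (c < x \<and> x < d))}"

definition kv_valid :: "nat \<Rightarrow> (real \<Rightarrow> real^2) \<Rightarrow> real \<Rightarrow> real \<Rightarrow> real list \<Rightarrow> bool" where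
  "kv_valid p g a b ts \<longleftrightarrow> sorted ts \<and> ts \<noteq> [] \<and> hd ts = a \<and> last ts = b \<and>
     count_list ts a = p + 1 \<and> count_list ts b = p + 1 \<and>
     (\<forall>x\<in>set ts - {a, b}. count_list ts x \<le> p) \<and>
     (\<forall>e\<in>elems ts. C1_on g (fst e) (snd e))"

definition Nk :: "nat \<Rightarrow> real list \<Rightarrow> int" where
  "Nk p ts = int (length ts) - int p - 1"

text \<open>extended knot sequence t_i, i in Z (fixed extension outside the indices -p..N)\<close>
definition knot :: "nat \<Rightarrow> real \<Rightarrow> real \<Rightarrow> real list \<Rightarrow> int \<Rightarrow> real" where
  "knot p a b ts i = (if - int p \<le> i \<and> i \<le> Nk p ts then ts ! nat (i + int p)
      else if i < - int p then a + of_int (i + int p) else b + of_int (i - Nk p ts))"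

definition nodes :: "(real \<Rightarrow> real^2) \<Rightarrow> real list \<Rightarrow> (real^2) set" where
  "nodes g ts = g ` set ts"

definition nmult :: "(real \<Rightarrow> real^2) \<Rightarrow> real list \<Rightarrow> real^2 \<Rightarrow> nat" where
  "nmult g ts z = (if z \<in> g ` set ts then count_list ts (SOME t. t \<in> set ts \<and> g t = z) else 0)"

definition kappa :: "(real \<Rightarrow> real^2) \<Rightarrow> real list \<Rightarrow> real" where
  "kappa g ts = Max {(snd e - fst e) / (snd e' - fst e') | e e'. e \<in> elems ts \<and> e' \<in> elems ts \<and>
      g ` {fst e..snd e} \<inter> g ` {fst e'..snd e'} \<noteq> {}}"

definition refines :: "(real \<Rightarrow> real^2) \<Rightarrow> real list \<Rightarrow> real list \<Rightarrow> bool" where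
  "refines g ts ts' \<longleftrightarrow> nodes g ts \<subseteq> nodes g ts' \<and>
     (\<forall>z\<in>nodes g ts. nmult g ts z \<le> nmult g ts' z) \<and>
     (\<forall>e\<in>elems ts'. \<exists>e'\<in>elems ts. g ` {fst e..snd e} \<subseteq> g ` {fst e'..snd e'} \<and>
         (\<exists>j::nat. snd e' - fst e' = 2 ^ j * (snd e - fst e)))"

inductive reach :: "nat \<Rightarrow> real \<Rightarrow> real \<Rightarrow> real list \<Rightarrow> real list \<Rightarrow> bool"
  for p :: nat and a b :: real and ts0 :: "real list" where
  base: "reach p a b ts0 ts0"
| bisect: "reach p a b ts0 ts \<Longrightarrow> e \<in> elems ts \<Longrightarrow> reach p a b ts0 (insort ((fst e + snd e) / 2) ts)"
| incr: "reach p a b ts0 ts \<Longrightarrow> x \<in> set ts \<Longrightarrow> x \<noteq> a \<Longrightarrow> x \<noteq> b \<Longrightarrow> count_list ts x < p \<Longrightarrow>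
         reach p a b ts0 (insort x ts)"

definition KK :: "nat \<Rightarrow> (real \<Rightarrow> real^2) \<Rightarrow> real \<Rightarrow> real \<Rightarrow> real list \<Rightarrow> real \<Rightarrow> real list set" where
  "KK p g a b ts0 kmax = {ts. reach p a b ts0 ts \<and> kappa g ts \<le> kmax}"

definition beta :: "(int \<Rightarrow> real) \<Rightarrow> int \<Rightarrow> nat \<Rightarrow> real \<Rightarrow> real" where
  "beta t i q x = (if t i \<noteq> t (i + int q) then (x - t i) / (t (i + int q) - t i) else 0)"

fun Bsp :: "(int \<Rightarrow> real) \<Rightarrow> int \<Rightarrow> nat \<Rightarrow> real \<Rightarrow> real" where
  "Bsp t i 0 x = (if t (i - 1) \<le> x \<and> x < t i then 1 else 0)"
| "Bsp t i (Suc q) x = beta t (i - 1) (Suc q) x * Bsp t i q x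
                       + (1 - beta t i (Suc q) x) * Bsp t (i + 1) q x"

definition what :: "nat \<Rightarrow> real \<Rightarrow> real \<Rightarrow> real list \<Rightarrow> (int \<Rightarrow> real) \<Rightarrow> real \<Rightarrow> real" where
  "what p a b ts0 w0 x = (\<Sum>k\<in>{1 - int p .. Nk p ts0 - int p}. w0 k * Bsp (knot p a b ts0) k p x)"

definition wts :: "nat \<Rightarrow> real \<Rightarrow> real \<Rightarrow> real list \<Rightarrow> (int \<Rightarrow> real) \<Rightarrow> real list \<Rightarrow> int \<Rightarrow> real" where
  "wts p a b ts0 w0 ts = (THE w. (\<forall>k. k \<notin> {1 - int p .. Nk p ts - int p} \<longrightarrow> w k = 0) \<and>
      (\<forall>x\<in>{a..b}. what p a b ts0 w0 x = (\<Sum>k\<in>{1 - int p .. Nk p ts - int p}. w k * Bsp (knot p a b ts) k p x)))"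

definition gamma_inv :: "bool \<Rightarrow> (real \<Rightarrow> real^2) \<Rightarrow> real \<Rightarrow> real \<Rightarrow> real^2 \<Rightarrow> real" where
  "gamma_inv cl g a b z = (THE t. t \<in> (if cl then {a..<b} else {a..b}) \<and> g t = z)"

definition Rn :: "nat \<Rightarrow> bool \<Rightarrow> (real \<Rightarrow> real^2) \<Rightarrow> real \<Rightarrow> real \<Rightarrow> real list \<Rightarrow> (int \<Rightarrow> real)
                  \<Rightarrow> real list \<Rightarrow> int \<Rightarrow> real^2 \<Rightarrow> real" where
  "Rn p cl g a b ts0 w0 ts i z = (let x = gamma_inv cl g a b z in
      wts p a b ts0 w0 ts i * Bsp (knot p a b ts) i p x / what p a b ts0 w0 x)"

definition Rbar :: "nat \<Rightarrow> bool \<Rightarrow> (real \<Rightarrow> real^2) \<Rightarrow> real \<Rightarrow> real \<Rightarrow> real list \<Rightarrow> (int \<Rightarrow> real)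
                  \<Rightarrow> real list \<Rightarrow> int \<Rightarrow> real^2 \<Rightarrow> real" where
  "Rbar p cl g a b ts0 w0 ts i z = (if i = 1 - int p
      then Rn p cl g a b ts0 w0 ts (1 - int p) z + Rn p cl g a b ts0 w0 ts (Nk p ts - int p) z
      else Rn p cl g a b ts0 w0 ts i z)"

definition supp_on :: "(real^2) set \<Rightarrow> (real^2 \<Rightarrow> real) \<Rightarrow> (real^2) set" where
  "supp_on G f = closure {z \<in> G. f z \<noteq> 0}"

definition newnodes :: "(real \<Rightarrow> real^2) \<Rightarrow> (nat \<Rightarrow> real list) \<Rightarrow> nat \<Rightarrow> (real^2) set" where
  "newnodes g Ks l = (if l = 0 then nodes g (Ks 0)
     else (nodes g (Ks l) - nodes g (Ks (l - 1))) \<union>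
          {z \<in> nodes g (Ks l) \<inter> nodes g (Ks (l - 1)). nmult g (Ks (l - 1)) z < nmult g (Ks l) z})"

definition Itilde :: "nat \<Rightarrow> bool \<Rightarrow> (real \<Rightarrow> real^2) \<Rightarrow> real \<Rightarrow> real \<Rightarrow> (int \<Rightarrow> real)
                      \<Rightarrow> (nat \<Rightarrow> real list) \<Rightarrow> nat \<Rightarrow> int set" where
  "Itilde p cl g a b w0 Ks l = {i \<in> {1 - int p + (if cl then 0 else 1) .. Nk p (Ks l) - int p - 1}.
      supp_on (g ` {a..b}) (Rbar p cl g a b (Ks 0) w0 (Ks l) i) \<inter> newnodes g Ks l \<noteq> {}}"

definition gen :: "(real \<Rightarrow> real^2) \<Rightarrow> real list \<Rightarrow> real \<times> real \<Rightarrow> real" where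
  "gen g ts0 e = (let e0 = (THE e0. e0 \<in> elems ts0 \<and> g ` {fst e..snd e} \<subseteq> g ` {fst e0..snd e0})
      in log 2 ((snd e0 - fst e0) / (snd e - fst e)))"

definition level :: "(real \<Rightarrow> real^2) \<Rightarrow> real list \<Rightarrow> real list \<Rightarrow> real^2 \<Rightarrow> real" where
  "level g ts0 ts z = Max {gen g ts0 e | e. e \<in> elems ts \<and> z \<in> g ` {fst e..snd e}}"

definition setting :: "nat \<Rightarrow> (real^2) set \<Rightarrow> (real \<Rightarrow> real^2) \<Rightarrow> real \<Rightarrow> real \<Rightarrow> bool \<Rightarrow> real
     \<Rightarrow> (int \<Rightarrow> real) \<Rightarrow> (nat \<Rightarrow> real list) \<Rightarrow> (nat \<Rightarrow> int \<Rightarrow> real^2) \<Rightarrow> bool" where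
  "setting p \<Omega> g a b cl kmax w0 Ks zt \<longleftrightarrow>
     geometry \<Omega> g a b cl \<and> kv_valid p g a b (Ks 0) \<and> kmax \<ge> 1 \<and>
     (\<forall>i\<in>{1 - int p .. Nk p (Ks 0) - int p}. w0 i > 0) \<and>
     w0 (1 - int p) = w0 (Nk p (Ks 0) - int p) \<and>
     (\<forall>l. Ks l \<in> KK p g a b (Ks 0) kmax) \<and>
     (\<forall>l. refines g (Ks l) (Ks (Suc l))) \<and>
     (\<forall>l i. i \<in> Itilde p cl g a b w0 Ks l \<longrightarrow>
        zt l i \<in> newnodes g Ks l \<inter> supp_on (g ` {a..b}) (Rbar p cl g a b (Ks 0) w0 (Ks l) i))"

definition Zset :: "nat \<Rightarrow> bool \<Rightarrow> (real \<Rightarrow> real^2) \<Rightarrow> real \<Rightarrow> real \<Rightarrow> (int \<Rightarrow> real)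
     \<Rightarrow> (nat \<Rightarrow> real list) \<Rightarrow> (nat \<Rightarrow> int \<Rightarrow> real^2) \<Rightarrow> nat \<Rightarrow> nat \<Rightarrow> real^2 \<Rightarrow> (nat \<times> int) set" where
  "Zset p cl g a b w0 Ks zt L m z = {(l, i). l \<le> L \<and> i \<in> Itilde p cl g a b w0 Ks l \<and>
      level g (Ks 0) (Ks l) (zt l i) = real m \<and> z = zt l i}"

end

theory Submission
  imports Defs
begin

(* A pair (l, i) in Z_m(z) requires z to be a new node of level l lying in the support of
   Rbar_{l,i}.  The multiplicity of z in K_l is 0 off the nodes, positive on them, nondecreasing
   in l and at most p + 1, so z is new only at l = 0 and at the at most p + 1 levels where its
   multiplicity jumps.  On a fixed level, the support of R_{l,i} is the image of the knot span
   [t_{i-1}, t_{i+p}]; since no knot is repeated more than p + 1 times, a parameter lies in at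
   most 2p + 2 spans, and z has at most two parameters (gamma^{-1}(z), and b in the closed
   case).  Counting i = 1 - p separately gives |Z_m(z)| <= (p + 2)(4p + 5), uniformly in m
   and L. *)

lemma count_list_insort:
  "count_list (insort y xs) x = count_list xs x + (if y = x then 1 else 0)"
  by (induction xs) auto

lemma card_strict_increases_le:
  fixes f :: "nat \<Rightarrow> nat"
  assumes "mono f" and bound: "\<And>l. f l \<le> N"
  shows "finite {l. f l < f (Suc l)}" "card {l. f l < f (Suc l)} \<le> N"
proof -
  let ?S = "{l. f l < f (Suc l)}"
  have less: "f (Suc l1) < f (Suc l2)" if "l1 \<in> ?S" "l2 \<in> ?S" "l1 < l2" for l1 l2
    using that monoD[OF \<open>mono f\<close>, of "Suc l1" l2] by simp
  have inj: "inj_on (\<lambda>l. f (Suc l)) ?S"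
    by (intro inj_onI) (metis less linorder_neqE_nat less_irrefl)
  have img: "(\<lambda>l. f (Suc l)) ` ?S \<subseteq> {1..N}"
    using bound by (auto simp: Suc_le_eq)
  show "finite ?S"
    using finite_imageD[OF finite_subset[OF img] inj] by simp
  show "card ?S \<le> N"
    using card_inj_on_le[OF inj img] by simp
qed

lemma card_Sigma_le:
  assumes "finite A" "card A \<le> m" "\<And>x. x \<in> A \<Longrightarrow> finite (B x)" "\<And>x. x \<in> A \<Longrightarrow> card (B x) \<le> n"
  shows "card (Sigma A B) \<le> m * n"
proof -
  have "card (Sigma A B) = (\<Sum>x\<in>A. card (B x))"
    using assms(1,3) by (simp add: card_SigmaI)
  also have "\<dots> \<le> card A * n"
    using sum_bounded_above[of A "\<lambda>x. card (B x)" n] assms(4) by simp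
  also have "\<dots> \<le> m * n"
    using assms(2) by simp
  finally show ?thesis .
qed

definition admissible_knots :: "nat \<Rightarrow> real \<Rightarrow> real \<Rightarrow> real list \<Rightarrow> bool" where
  "admissible_knots p a b ts \<longleftrightarrow> sorted ts \<and> ts \<noteq> [] \<and> set ts \<subseteq> {a..b} \<and>
     (\<forall>x. count_list ts x \<le> p + 1)"

lemma kv_valid_imp_admissible_knots:
  assumes "kv_valid p g a b ts"
  shows "admissible_knots p a b ts"
proof -
  have sorted: "sorted ts" and ne: "ts \<noteq> []" and hd: "hd ts = a" and last: "last ts = b"
    using assms by (auto simp: kv_valid_def)
  have "a \<le> x" if "x \<in> set ts" for x
    using sorted ne hd that by (cases ts) auto
  moreover have "x \<le> b" if "x \<in> set ts" for x
    using sorted that unfolding last[symmetric]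
    by (induction ts rule: rev_induct) (auto simp: sorted_append)
  moreover have "count_list ts x \<le> p + 1" for x
  proof (cases "x \<in> set ts - {a, b}")
    case True
    then have "count_list ts x \<le> p"
      using assms unfolding kv_valid_def by blast
    then show ?thesis by simp
  qed (use assms in \<open>auto simp: kv_valid_def\<close>)
  ultimately show ?thesis
    using sorted ne by (auto simp: admissible_knots_def)
qed

lemma reach_admissible_knots:
  assumes "reach p a b ts0 ts" "admissible_knots p a b ts0"
  shows "admissible_knots p a b ts"
  using assms
proof (induction rule: reach.induct)
  case base
  then show ?case .
next
  case (bisect ts e)
  obtain c d where e: "e = (c, d)" and cd: "c \<in> set ts" "d \<in> set ts" "c < d"
    and gap: "\<forall>x\<in>set ts. \<not> (c < x \<and> x < d)"
    using bisect.hyps(2) by (cases e) (auto simp: elems_def)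
  have fresh: "(c + d) / 2 \<notin> set ts"
    using gap cd(3) by force
  show ?case
    using bisect.IH[OF bisect.prems] cd fresh unfolding e admissible_knots_def
    by (auto simp: sorted_insort set_insort_key count_list_insort)
next
  case (incr ts x)
  then show ?case
    by (auto simp: admissible_knots_def sorted_insort set_insort_key count_list_insort)
qed

lemma setting_admissible_knots:
  assumes "setting p \<Omega> g a b cl kmax w0 Ks zt"
  shows "admissible_knots p a b (Ks l)"
proof (rule reach_admissible_knots)
  show "reach p a b (Ks 0) (Ks l)"
    using assms by (simp add: setting_def KK_def)
  show "admissible_knots p a b (Ks 0)"
    using assms by (intro kv_valid_imp_admissible_knots[of p g]) (simp add: setting_def)
qed

lemma knot_eq_nth:
  assumes "- int p \<le> i" "i \<le> Nk p ts"
  shows "knot p a b ts i = ts ! nat (i + int p)" "nat (i + int p) < length ts"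
  using assms by (auto simp: knot_def Nk_def)

lemma knot_mono:
  assumes adm: "admissible_knots p a b ts" and "i \<le> j"
  shows "knot p a b ts i \<le> knot p a b ts j"
proof -
  have sorted: "sorted ts" and range: "set ts \<subseteq> {a..b}" and "ts \<noteq> []"
    using adm by (auto simp: admissible_knots_def)
  then have "- int p \<le> Nk p ts" and "a \<le> b"
    using range by (auto simp: Nk_def neq_Nil_conv)
  have low: "knot p a b ts k < a" if "k < - int p" for k
    using that by (simp add: knot_def)
  have high: "b < knot p a b ts k" if "Nk p ts < k" for k
    using that \<open>- int p \<le> Nk p ts\<close> by (simp add: knot_def)
  have mid: "knot p a b ts k \<in> {a..b}" if "- int p \<le> k" "k \<le> Nk p ts" for k
    using knot_eq_nth[OF that] range nth_mem by fastforce
  consider "j < - int p" | "Nk p ts < i" | "- int p \<le> i" "j \<le> Nk p ts"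
    | "i < - int p" "- int p \<le> j" | "i \<le> Nk p ts" "Nk p ts < j"
    by linarith
  then show ?thesis
  proof cases
    case 3
    then show ?thesis
      using \<open>i \<le> j\<close> knot_eq_nth[of p i ts] knot_eq_nth[of p j ts] sorted
      by (simp add: sorted_nth_mono nat_mono)
  next
    case 4
    then show ?thesis
      using low[of i] high[of j] mid[of j] \<open>a \<le> b\<close> by (cases "j \<le> Nk p ts") auto
  next
    case 5
    then show ?thesis
      using low[of i] high[of j] mid[of i] \<open>a \<le> b\<close> by (cases "- int p \<le> i") auto
  qed (use \<open>i \<le> j\<close> \<open>- int p \<le> Nk p ts\<close> in \<open>auto simp: knot_def\<close>)
qed

lemma Bsp_nonzero_imp_in_knot_span:
  assumes mono: "\<And>i j. i \<le> j \<Longrightarrow> t i \<le> t j" and "Bsp t i q x \<noteq> 0"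
  shows "t (i - 1) \<le> x \<and> x < t (i + int q)"
  using assms(2)
proof (induction q arbitrary: i)
  case 0
  then show ?case by (auto split: if_splits)
next
  case (Suc q)
  then consider "Bsp t i q x \<noteq> 0" | "Bsp t (i + 1) q x \<noteq> 0"
    by fastforce
  then show ?case
  proof cases
    case 1
    with Suc.IH mono[of "i + int q" "i + int (Suc q)"] show ?thesis by force
  next
    case 2
    with Suc.IH[of "i + 1"] mono[of "i - 1" i] show ?thesis by (simp add: add_ac)
  qed
qed

lemma gamma_inv_eq:
  assumes "geometry \<Omega> g a b cl" "s \<in> (if cl then {a..<b} else {a..b})"
  shows "gamma_inv cl g a b (g s) = s"
  unfolding gamma_inv_def
  using assms by (intro the_equality) (auto simp: geometry_def inj_on_def split: if_splits)

lemma gamma_inv_in_preimage: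
  assumes G: "geometry \<Omega> g a b cl" and "z \<in> g ` {a..b}"
  shows "gamma_inv cl g a b z \<in> {a..b}" "g (gamma_inv cl g a b z) = z"
proof -
  obtain s where "s \<in> (if cl then {a..<b} else {a..b})" "g s = z"
  proof -
    obtain s where s: "s \<in> {a..b}" "g s = z"
      using assms(2) by blast
    show thesis
    proof (cases "cl \<and> s = b")
      case True
      \<comment> \<open>in the closed case the endpoint b is represented by a\<close>
      with G s that[of a] show ?thesis by (simp add: geometry_def)
    next
      case False
      with s that[of s] show ?thesis by auto
    qed
  qed
  with gamma_inv_eq[OF G] show "gamma_inv cl g a b z \<in> {a..b}" "g (gamma_inv cl g a b z) = z"
    by (auto split: if_splits)
qed

lemma supp_on_Rn_subset_knot_span:
  assumes G: "geometry \<Omega> g a b cl" and adm: "admissible_knots p a b ts"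
  shows "supp_on (g ` {a..b}) (Rn p cl g a b ts0 w0 ts i)
     \<subseteq> g ` ({knot p a b ts (i - 1) .. knot p a b ts (i + int p)} \<inter> {a..b})"
  unfolding supp_on_def
proof (rule closure_minimal)
  have "continuous_on {a..b} g"
    using G by (simp add: geometry_def)
  then show "closed (g ` ({knot p a b ts (i - 1) .. knot p a b ts (i + int p)} \<inter> {a..b}))"
    by (intro compact_imp_closed compact_continuous_image) (auto intro: continuous_on_subset)
next
  show "{z \<in> g ` {a..b}. Rn p cl g a b ts0 w0 ts i z \<noteq> 0}
      \<subseteq> g ` ({knot p a b ts (i - 1) .. knot p a b ts (i + int p)} \<inter> {a..b})"
  proof clarify
    fix s assume "s \<in> {a..b}" "Rn p cl g a b ts0 w0 ts i (g s) \<noteq> 0"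
    then have "Bsp (knot p a b ts) i p (gamma_inv cl g a b (g s)) \<noteq> 0"
      by (auto simp: Rn_def Let_def)
    then have "gamma_inv cl g a b (g s) \<in> {knot p a b ts (i - 1) .. knot p a b ts (i + int p)}"
      using Bsp_nonzero_imp_in_knot_span[OF knot_mono[OF adm]] by fastforce
    with gamma_inv_in_preimage[OF G, of "g s"] \<open>s \<in> {a..b}\<close>
    show "g s \<in> g ` ({knot p a b ts (i - 1) .. knot p a b ts (i + int p)} \<inter> {a..b})"
      by (metis IntI imageI)
  qed
qed

definition knot_span_indices :: "nat \<Rightarrow> real \<Rightarrow> real \<Rightarrow> real list \<Rightarrow> real \<Rightarrow> int set" where
  "knot_span_indices p a b ts s = {i. 1 - int p \<le> i \<and> i \<le> Nk p ts - int p \<and>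
     knot p a b ts (i - 1) \<le> s \<and> s \<le> knot p a b ts (i + int p)}"

lemma finite_knot_span_indices: "finite (knot_span_indices p a b ts s)"
  by (rule finite_subset[of _ "{1 - int p .. Nk p ts - int p}"]) (auto simp: knot_span_indices_def)

lemma constant_knots_le_count_list:
  assumes "\<forall>j\<in>{j0..j1}. knot p a b ts j = s" "- int p \<le> j0" "j1 \<le> Nk p ts"
  shows "nat (j1 - j0 + 1) \<le> count_list ts s"
proof -
  have "{nat (j0 + int p) ..< nat (j1 + int p + 1)} \<subseteq> {k. k < length ts \<and> ts ! k = s}"
  proof
    fix k assume "k \<in> {nat (j0 + int p) ..< nat (j1 + int p + 1)}"
    then have "int k - int p \<in> {j0..j1}"
      using assms(2) by auto
    then show "k \<in> {k. k < length ts \<and> ts ! k = s}"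
      using knot_eq_nth(1)[of p "int k - int p" ts a b] knot_eq_nth(2)[of p "int k - int p" ts] assms by auto
  qed
  then have "card {nat (j0 + int p) ..< nat (j1 + int p + 1)} \<le> card {k. k < length ts \<and> ts ! k = s}"
    by (rule card_mono[rotated]) simp
  then show ?thesis
    using assms(2) by (simp add: count_list_eq_length_filter length_filter_conv_card eq_commute)
qed

lemma card_knot_span_indices:
  assumes adm: "admissible_knots p a b ts"
  shows "card (knot_span_indices p a b ts s) \<le> 2 * p + 2"
proof (cases "knot_span_indices p a b ts s = {}")
  case False
  let ?I = "knot_span_indices p a b ts s"
  have fin: "finite ?I"
    by (rule finite_knot_span_indices)
  define i0 where "i0 = Min ?I"
  have i0: "i0 \<in> ?I"
    using fin False by (simp add: i0_def)
  have "?I \<subseteq> {i0 .. i0 + 2 * int p + 1}"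
  proof
    fix i assume i: "i \<in> ?I"
    have "i \<le> i0 + 2 * int p + 1"
    proof (rule ccontr)
      assume "\<not> i \<le> i0 + 2 * int p + 1"
      \<comment> \<open>both spans contain s, so all knots between them equal s: more than p + 1 of them\<close>
      have "knot p a b ts j = s" if "j \<in> {i0 + int p .. i - 1}" for j
      proof -
        have "knot p a b ts (i0 + int p) \<le> knot p a b ts j" "knot p a b ts j \<le> knot p a b ts (i - 1)"
          using that by (auto intro: knot_mono[OF adm])
        moreover have "s \<le> knot p a b ts (i0 + int p)" "knot p a b ts (i - 1) \<le> s"
          using i i0 by (auto simp: knot_span_indices_def)
        ultimately show ?thesis by linarith
      qed
      then have "nat (i - 1 - (i0 + int p) + 1) \<le> count_list ts s"
        using i i0 constant_knots_le_count_list[of "i0 + int p" "i - 1" p a b ts s]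
        by (auto simp: knot_span_indices_def)
      moreover have "p + 2 \<le> nat (i - 1 - (i0 + int p) + 1)"
        using \<open>\<not> i \<le> i0 + 2 * int p + 1\<close> by linarith
      moreover have "count_list ts s \<le> p + 1"
        using adm by (simp add: admissible_knots_def)
      ultimately show False by linarith
    qed
    with i fin show "i \<in> {i0 .. i0 + 2 * int p + 1}"
      by (simp add: i0_def)
  qed
  then have "card ?I \<le> card {i0 .. i0 + 2 * int p + 1}"
    by (rule card_mono[rotated]) simp
  then show ?thesis by simp
qed simp

lemma supp_on_Rbar_imp_knot_span_index:
  assumes G: "geometry \<Omega> g a b cl" and adm: "admissible_knots p a b ts"
    and i: "i \<in> {1 - int p .. Nk p ts - int p - 1}"
    and z: "z \<in> supp_on (g ` {a..b}) (Rbar p cl g a b ts0 w0 ts i)"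
  shows "i \<in> {1 - int p} \<union> knot_span_indices p a b ts (gamma_inv cl g a b z)
    \<union> knot_span_indices p a b ts b"
proof (cases "i = 1 - int p")
  case False
  then have "Rbar p cl g a b ts0 w0 ts i = Rn p cl g a b ts0 w0 ts i"
    by (simp add: Rbar_def fun_eq_iff)
  with z have "z \<in> supp_on (g ` {a..b}) (Rn p cl g a b ts0 w0 ts i)"
    by simp
  then obtain s where s: "s \<in> {knot p a b ts (i - 1) .. knot p a b ts (i + int p)}" "s \<in> {a..b}"
    and "g s = z"
    using supp_on_Rn_subset_knot_span[OF G adm] by blast
  then have "s = b \<or> s = gamma_inv cl g a b z"
    using gamma_inv_eq[OF G, of s] by (cases cl) force+
  with s i show ?thesis
    by (auto simp: knot_span_indices_def)
qed simp

definition supporting_indices :: "nat \<Rightarrow> bool \<Rightarrow> (real \<Rightarrow> real^2) \<Rightarrow> real \<Rightarrow> real \<Rightarrow> real list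
    \<Rightarrow> (int \<Rightarrow> real) \<Rightarrow> real list \<Rightarrow> real^2 \<Rightarrow> int set" where
  "supporting_indices p cl g a b ts0 w0 ts z = {i \<in> {1 - int p .. Nk p ts - int p - 1}.
     z \<in> supp_on (g ` {a..b}) (Rbar p cl g a b ts0 w0 ts i)}"

lemma finite_supporting_indices: "finite (supporting_indices p cl g a b ts0 w0 ts z)"
  by (rule finite_subset[of _ "{1 - int p .. Nk p ts - int p - 1}"]) (auto simp: supporting_indices_def)

lemma card_supporting_indices:
  assumes "geometry \<Omega> g a b cl" "admissible_knots p a b ts"
  shows "card (supporting_indices p cl g a b ts0 w0 ts z) \<le> 4 * p + 5"
proof -
  let ?J = "knot_span_indices p a b ts"
  have "card (supporting_indices p cl g a b ts0 w0 ts z)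
      \<le> card ({1 - int p} \<union> ?J (gamma_inv cl g a b z) \<union> ?J b)"
    using supp_on_Rbar_imp_knot_span_index[OF assms]
    by (intro card_mono) (auto simp: finite_knot_span_indices supporting_indices_def)
  also have "\<dots> \<le> card {1 - int p} + card (?J (gamma_inv cl g a b z)) + card (?J b)"
    by (meson card_Un_le add_right_mono order_trans)
  also have "\<dots> \<le> 4 * p + 5"
    using card_knot_span_indices[OF assms(2), of "gamma_inv cl g a b z"]
      card_knot_span_indices[OF assms(2), of b]
    by simp
  finally show ?thesis .
qed

lemma nmult_pos:
  assumes "z \<in> nodes g ts"
  shows "0 < nmult g ts z"
proof -
  have "(SOME t. t \<in> set ts \<and> g t = z) \<in> set ts"
    using assms unfolding nodes_def by (rule imageE) (rule someI2, auto)
  with assms show ?thesis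
    by (auto simp: nmult_def nodes_def count_list_0_iff intro!: gr0I)
qed

lemma nmult_eq_0: "z \<notin> nodes g ts \<Longrightarrow> nmult g ts z = 0"
  by (simp add: nmult_def nodes_def)

lemma nmult_le: "admissible_knots p a b ts \<Longrightarrow> nmult g ts z \<le> p + 1"
  by (simp add: nmult_def admissible_knots_def)

lemma refines_nmult_mono:
  assumes "refines g ts ts'"
  shows "nmult g ts z \<le> nmult g ts' z"
proof (cases "z \<in> nodes g ts")
  case True
  with assms show ?thesis
    unfolding refines_def by blast
qed (simp add: nmult_eq_0)

lemma newnodes_Suc_imp_nmult_less:
  assumes "z \<in> newnodes g Ks (Suc l)"
  shows "nmult g (Ks l) z < nmult g (Ks (Suc l)) z"
proof -
  have "z \<in> nodes g (Ks (Suc l)) \<and> z \<notin> nodes g (Ks l) \<or> nmult g (Ks l) z < nmult g (Ks (Suc l)) z"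
    using assms unfolding newnodes_def by auto
  then show ?thesis
    using nmult_pos nmult_eq_0 by fastforce
qed

lemma card_new_node_levels:
  assumes ref: "\<And>l. refines g (Ks l) (Ks (Suc l))" and adm: "\<And>l. admissible_knots p a b (Ks l)"
  shows "finite {l. z \<in> newnodes g Ks l}" "card {l. z \<in> newnodes g Ks l} \<le> p + 2"
proof -
  let ?f = "\<lambda>l. nmult g (Ks l) z"
  let ?S = "{l. ?f l < ?f (Suc l)}"
  have "mono ?f"
    using ref refines_nmult_mono by (simp add: mono_iff_le_Suc)
  then have S: "finite ?S" "card ?S \<le> p + 1"
    using card_strict_increases_le[of ?f "p + 1"] nmult_le[OF adm] by auto
  have sub: "{l. z \<in> newnodes g Ks l} \<subseteq> insert 0 (Suc ` ?S)"
  proof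
    fix l assume "l \<in> {l. z \<in> newnodes g Ks l}"
    then show "l \<in> insert 0 (Suc ` ?S)"
      using newnodes_Suc_imp_nmult_less by (cases l) auto
  qed
  with S show "finite {l. z \<in> newnodes g Ks l}"
    by (meson finite_imageI finite_insert finite_subset)
  have "card {l. z \<in> newnodes g Ks l} \<le> card (insert 0 (Suc ` ?S))"
    using sub S by (intro card_mono) auto
  also have "\<dots> = Suc (card ?S)"
    using S by (simp add: card_image)
  finally show "card {l. z \<in> newnodes g Ks l} \<le> p + 2"
    using S by simp
qed

lemma Zset_subset_Sigma:
  assumes "setting p \<Omega> g a b cl kmax w0 Ks zt"
  shows "Zset p cl g a b w0 Ks zt L m z
    \<subseteq> (SIGMA l:{l. z \<in> newnodes g Ks l}. supporting_indices p cl g a b (Ks 0) w0 (Ks l) z)"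
proof
  fix x assume "x \<in> Zset p cl g a b w0 Ks zt L m z"
  then obtain l i where x: "x = (l, i)" and i: "i \<in> Itilde p cl g a b w0 Ks l" and "z = zt l i"
    by (auto simp: Zset_def)
  then have "z \<in> newnodes g Ks l \<inter> supp_on (g ` {a..b}) (Rbar p cl g a b (Ks 0) w0 (Ks l) i)"
    using assms unfolding setting_def by blast
  with i x show "x \<in> (SIGMA l:{l. z \<in> newnodes g Ks l}. supporting_indices p cl g a b (Ks 0) w0 (Ks l) z)"
    by (auto simp: Itilde_def supporting_indices_def split: if_splits)
qed

theorem lemma4p3:
  fixes p :: nat
  assumes "p \<ge> 1"
  shows "\<exists>C2 > 0. \<forall>\<Omega> g a b cl kmax w0 Ks zt L m z.
           setting p \<Omega> g a b cl kmax w0 Ks zt \<and> z \<in> nodes g (Ks L) \<longrightarrow>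
           real (card (Zset p cl g a b w0 Ks zt L m z)) \<le> C2"
proof (intro exI[of _ "real ((p + 2) * (4 * p + 5))"] conjI allI impI)
  fix \<Omega> g a b cl kmax w0 Ks zt L m z
  assume "setting p \<Omega> g a b cl kmax w0 Ks zt \<and> z \<in> nodes g (Ks L)"
  then have st: "setting p \<Omega> g a b cl kmax w0 Ks zt" ..
  then have G: "geometry \<Omega> g a b cl" and ref: "\<And>l. refines g (Ks l) (Ks (Suc l))"
    and adm: "\<And>l. admissible_knots p a b (Ks l)"
    by (simp_all add: setting_def setting_admissible_knots)
  note levels = card_new_node_levels[where g = g and Ks = Ks and z = z, OF ref adm]
  have "card (Zset p cl g a b w0 Ks zt L m z)
      \<le> card (SIGMA l:{l. z \<in> newnodes g Ks l}. supporting_indices p cl g a b (Ks 0) w0 (Ks l) z)"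
    using levels finite_supporting_indices
    by (intro card_mono[OF _ Zset_subset_Sigma[OF st]] finite_SigmaI)
  also have "\<dots> \<le> (p + 2) * (4 * p + 5)"
    using levels finite_supporting_indices card_supporting_indices[OF G adm]
    by (intro card_Sigma_le)
  finally show "real (card (Zset p cl g a b w0 Ks zt L m z)) \<le> real ((p + 2) * (4 * p + 5))"
    by linarith
qed (rule of_nat_0_less_iff[THEN iffD2], simp)

end
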